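(* Let $\bar\lambda\in(0,\infty)^k$ be a tuning parameter satisfying $\bar\lambda_j/(2g'(\|Y-X\hat\beta^{\bar\lambda}\|_2^2))=\|(XP_jM_j^{+})^\top\varepsilon\|_{q_j}^*$ for all $j$, and let $\bar\beta:=\hat\beta^{\bar\lambda}$. Then, with probability one, $$\frac1n\|X(\beta^*-\bar\beta)\|_2^2\le\min_{\beta\in\mathbb{R}^p}\Big\{\frac1n\|X(\beta^*-\beta)\|_2^2+\frac4n\sum_{j=1}^k\|(XP_jM_j^{+})^\top\varepsilon\|_{q_j}^*\,\|M_j\beta\|_{q_j}\Big\}.$$
   Context: Standing setup. Model: $Y=X\beta^*+\varepsilon$ with $Y\in\mathbb{R}^n$, $X\in\mathbb{R}^{n\times p}$, $\beta^*\in\mathbb{R}^p$, $\varepsilon\in\mathbb{R}^n$ (random). Link function $g:\mathbb{R}\to[0,\infty)$ with $g(0)=0$, $g$ continuous and strictly increasing on $[0,\infty)$, continuously differentiable on $(0,\infty)$ with strictly positive and non-increasing derivative $g'$, and such that $\alpha\mapsto g(\|\alpha\|_2^2)$ is strictly convex on $\mathbb{R}^n$. Penalty: $k\ge1$, matrices $M_1,\dots,M_k\in\mathbb{R}^{p\times p}$ with $\bigcap_{j=1}^k\mathrm{Ker}(M_j)=\{0\}$, exponents $q_j\ge1$, $\|\cdot\|_{q_j}$ the $\ell_{q_j}$-norm on $\mathbb{R}^p$, and $\|\cdot\|_{q_j}^*$ its dual norm. For $\lambda\in(0,\infty)^k$, $\hat\beta^\lambda$ denotes any element of $\arg\min_{\beta\in\mathbb{R}^p}\{g(\|Y-X\beta\|_2^2)+\sum_{j=1}^k\lambda_j\|M_j\beta\|_{q_j}\}$.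 $A^+$ denotes the Moore–Penrose pseudoinverse; $P_1,\dots,P_k\in\mathbb{R}^{p\times p}$ are fixed projection matrices with $\sum_{j=1}^kP_jM_j^+M_j=I_{p\times p}$. Noise assumption: with probability one, $Y\neq0$ and $\min_{j}\|(XP_jM_j^{+})^\top\varepsilon\|_{q_j}^*>0$. *)

theory Defs
  imports "HOL-Analysis.Analysis"
begin

definition strictly_convex_on :: "'a::real_vector set \<Rightarrow> ('a \<Rightarrow> real) \<Rightarrow> bool" where
  "strictly_convex_on S f \<longleftrightarrow>
     (\<forall>x\<in>S. \<forall>y\<in>S. \<forall>t::real. x \<noteq> y \<and> 0 < t \<and> t < 1 \<longrightarrow>
        f ((1 - t) *\<^sub>R x + t *\<^sub>R y) < (1 - t) * f x + t * f y)"

definition pinv :: "real^'n^'m \<Rightarrow> real^'m^'n" where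
  "pinv A = (THE B. A ** B ** A = A \<and> B ** A ** B = B \<and>
                   transpose (A ** B) = A ** B \<and> transpose (B ** A) = B ** A)"

definition lq_norm :: "real \<Rightarrow> real^'p \<Rightarrow> real" where
  "lq_norm q x = (\<Sum>i\<in>UNIV. \<bar>x $ i\<bar> powr q) powr (1 / q)"

definition dual_norm :: "(real^'p \<Rightarrow> real) \<Rightarrow> real^'p \<Rightarrow> real" where
  "dual_norm N v = Sup {v \<bullet> x | x. N x \<le> 1}"

definition objective ::
  "(real \<Rightarrow> real) \<Rightarrow> real^'p^'n \<Rightarrow> real^'n \<Rightarrow> nat \<Rightarrow> (nat \<Rightarrow> real^'p^'p)
     \<Rightarrow> (nat \<Rightarrow> real) \<Rightarrow> (nat \<Rightarrow> real) \<Rightarrow> real^'p \<Rightarrow> real" where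
  "objective g X Y k M q lam \<beta> =
     g ((norm (Y - X *v \<beta>))\<^sup>2) + (\<Sum>j\<in>{1..k}. lam j * lq_norm (q j) (M j *v \<beta>))"

end

theory Submission
  imports Defs
begin

text \<open>
  Fix a competitor \<open>\<beta>\<close> and write \<open>D\<^sub>j\<close> for the dual norm of the projected noise
  \<open>(X P\<^sub>j M\<^sub>j\<^sup>+)\<^sup>T \<epsilon>\<close>. Since the penalty is convex and \<open>g\<close> is differentiable at the
  positive squared residual, the minimality of \<open>\<beta>bar\<close> along the segment towards \<open>\<beta>\<close> gives
  \<open>2 g'(\<parallel>Y - X\<beta>bar\<parallel>\<^sup>2) \<langle>Y - X\<beta>bar, X(\<beta> - \<beta>bar)\<rangle> \<le> pen \<beta> - pen \<beta>bar\<close>, and the choice of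
  the tuning parameter turns the right-hand side into \<open>2 g' \<Sum>\<^sub>j D\<^sub>j (\<parallel>M\<^sub>j\<beta>\<parallel> - \<parallel>M\<^sub>j\<beta>bar\<parallel>)\<close>.
  Splitting \<open>X = \<Sum>\<^sub>j X P\<^sub>j M\<^sub>j\<^sup>+ M\<^sub>j\<close>, the noise term \<open>\<langle>\<epsilon>, X(\<beta>bar - \<beta>)\<rangle>\<close> is at most
  \<open>\<Sum>\<^sub>j D\<^sub>j \<parallel>M\<^sub>j(\<beta>bar - \<beta>)\<parallel>\<close> by the dual-norm inequality. Adding the two bounds controls
  \<open>\<langle>a, a - b\<rangle>\<close> for \<open>a = X(\<beta>star - \<beta>bar)\<close>, \<open>b = X(\<beta>star - \<beta>)\<close>, and
  \<open>2\<langle>a, a - b\<rangle> = \<parallel>a\<parallel>\<^sup>2 - \<parallel>b\<parallel>\<^sup>2 + \<parallel>a - b\<parallel>\<^sup>2\<close> yields the oracle inequality.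
\<close>

lemma powr_convex_nonneg:
  assumes q: "q \<ge> 1"
  shows "convex_on {0..} (\<lambda>x::real. x powr q)"
proof (rule convex_onI)
  have shrink: "(t * w) powr q \<le> t * w powr q" if "0 \<le> t" "t \<le> 1" "w \<ge> 0" for t w
  proof (cases "t = 0")
    case False
    then have "t powr q \<le> t" using that q powr_le_one_le by auto
    then show ?thesis using that by (simp add: powr_mult mult_right_mono)
  qed (use q in simp)
  fix t u v :: real
  assume t: "0 < t" "t < 1" and uv: "u \<in> {0..}" "v \<in> {0..}"
  consider "u = 0" | "v = 0" | "u > 0" "v > 0" using uv by fastforce
  then show "((1 - t) *\<^sub>R u + t *\<^sub>R v) powr q \<le> (1 - t) * u powr q + t * v powr q"
  proof cases
    case 1 then show ?thesis using shrink[of t v] t uv q by simp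
  next
    case 2 then show ?thesis using shrink[of "1 - t" u] t uv q by simp
  next
    case 3 then show ?thesis using convex_onD[OF powr_convex[OF q], of t u v] t by simp
  qed
qed simp

lemma abs_powr_convex:
  assumes q: "q \<ge> 1"
  shows "convex_on UNIV (\<lambda>x::real. \<bar>x\<bar> powr q)"
proof (rule convex_onI)
  fix t a b :: real
  assume t: "0 < t" "t < 1"
  have "\<bar>(1 - t) *\<^sub>R a + t *\<^sub>R b\<bar> \<le> (1 - t) * \<bar>a\<bar> + t * \<bar>b\<bar>"
    using abs_triangle_ineq[of "(1 - t) * a" "t * b"] t by (simp add: abs_mult)
  then have "\<bar>(1 - t) *\<^sub>R a + t *\<^sub>R b\<bar> powr q \<le> ((1 - t) * \<bar>a\<bar> + t * \<bar>b\<bar>) powr q"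
    using q by (intro powr_mono2) auto
  also have "\<dots> \<le> (1 - t) * \<bar>a\<bar> powr q + t * \<bar>b\<bar> powr q"
    using convex_onD[OF powr_convex_nonneg[OF q], of t "\<bar>a\<bar>" "\<bar>b\<bar>"] t by simp
  finally show "\<bar>(1 - t) *\<^sub>R a + t *\<^sub>R b\<bar> powr q \<le> (1 - t) * \<bar>a\<bar> powr q + t * \<bar>b\<bar> powr q" .
qed simp

lemma subadditive_if_convex_unit_ball:
  fixes N :: "'a::real_vector \<Rightarrow> real"
  assumes homogeneous: "\<And>c x. c > 0 \<Longrightarrow> N (c *\<^sub>R x) = c * N x"
    and positive: "\<And>x. x \<noteq> 0 \<Longrightarrow> N x > 0"
    and ball: "convex {x. N x \<le> 1}"
  shows "N (x + y) \<le> N x + N y"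
proof -
  have N0: "N 0 = 0" using homogeneous[of 2 0] by simp
  show ?thesis
  proof (cases "x = 0 \<or> y = 0")
    case True then show ?thesis using N0 by auto
  next
    case False
    define a b where "a = N x" and "b = N y"
    have a: "a > 0" and b: "b > 0" using False positive by (auto simp: a_def b_def)
    have "(1/a) *\<^sub>R x \<in> {x. N x \<le> 1}" "(1/b) *\<^sub>R y \<in> {x. N x \<le> 1}"
      using a b by (simp_all add: homogeneous a_def b_def)
    then have "(1 - b/(a+b)) *\<^sub>R ((1/a) *\<^sub>R x) + (b/(a+b)) *\<^sub>R ((1/b) *\<^sub>R y) \<in> {x. N x \<le> 1}"
      using a b by (intro convexD_alt[OF ball]) auto
    moreover have "(1 - b/(a+b)) *\<^sub>R ((1/a) *\<^sub>R x) + (b/(a+b)) *\<^sub>R ((1/b) *\<^sub>R y) = (1/(a+b)) *\<^sub>R (x + y)"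
      using a b by (simp add: field_simps scaleR_add_right)
    ultimately have "N (x + y) / (a + b) \<le> 1" using a b by (simp add: homogeneous)
    then show ?thesis using a b by (simp add: a_def b_def)
  qed
qed

lemma lq_norm_scaleR:
  assumes q: "q \<ge> 1"
  shows "lq_norm q (c *\<^sub>R x) = \<bar>c\<bar> * lq_norm q x"
proof -
  have "lq_norm q (c *\<^sub>R x) = (\<bar>c\<bar> powr q * (\<Sum>i\<in>UNIV. \<bar>x $ i\<bar> powr q)) powr (1/q)"
    by (simp add: lq_norm_def abs_mult powr_mult sum_distrib_left)
  also have "\<dots> = \<bar>c\<bar> * lq_norm q x"
    using q by (simp add: lq_norm_def powr_mult powr_powr sum_nonneg)
  finally show ?thesis .
qed

lemma lq_norm_minus: "q \<ge> 1 \<Longrightarrow> lq_norm q (- x) = lq_norm q x"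
  using lq_norm_scaleR[of q "-1" x] by simp

lemma abs_le_lq_norm:
  assumes q: "q \<ge> 1"
  shows "\<bar>x $ i\<bar> \<le> lq_norm q x"
proof -
  have "\<bar>x $ i\<bar> powr q \<le> (\<Sum>i\<in>UNIV. \<bar>x $ i\<bar> powr q)"
    by (rule member_le_sum) auto
  then have "(\<bar>x $ i\<bar> powr q) powr (1/q) \<le> lq_norm q x"
    unfolding lq_norm_def using q by (intro powr_mono2) auto
  then show ?thesis using q by (simp add: powr_powr)
qed

lemma lq_norm_pos:
  assumes "q \<ge> 1" and "x \<noteq> 0"
  shows "lq_norm q x > 0"
proof -
  obtain i where "x $ i \<noteq> 0" using \<open>x \<noteq> 0\<close> by (auto simp: vec_eq_iff)
  then show ?thesis using abs_le_lq_norm[OF \<open>q \<ge> 1\<close>, of x i] by linarith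
qed

lemma lq_norm_le_1_iff:
  assumes q: "q \<ge> 1"
  shows "lq_norm q x \<le> 1 \<longleftrightarrow> (\<Sum>i\<in>UNIV. \<bar>x $ i\<bar> powr q) \<le> 1"
proof -
  define S where "S = (\<Sum>i\<in>UNIV. \<bar>x $ i\<bar> powr q)"
  have S: "S \<ge> 0" by (simp add: S_def sum_nonneg)
  have "S powr (1/q) \<le> 1 \<longleftrightarrow> S \<le> 1"
  proof
    assume "S powr (1/q) \<le> 1"
    then have "(S powr (1/q)) powr q \<le> 1" using q by (intro powr_le1) auto
    then show "S \<le> 1" using q S by (simp add: powr_powr)
  qed (use q S in \<open>intro powr_le1; simp\<close>)
  then show ?thesis by (simp add: lq_norm_def S_def)
qed

lemma convex_lq_norm_unit_ball:
  assumes q: "q \<ge> 1"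
  shows "convex {x::real^'a. lq_norm q x \<le> 1}"
proof (rule convexI)
  fix z w :: "real^'a" and u v :: real
  assume zw: "z \<in> {z. lq_norm q z \<le> 1}" "w \<in> {z. lq_norm q z \<le> 1}"
    and uv: "0 \<le> u" "0 \<le> v" "u + v = 1"
  then have u: "u = 1 - v" by simp
  have "(\<Sum>i\<in>UNIV. \<bar>(u *\<^sub>R z + v *\<^sub>R w) $ i\<bar> powr q)
      \<le> (\<Sum>i\<in>UNIV. u * \<bar>z $ i\<bar> powr q + v * \<bar>w $ i\<bar> powr q)"
    using convex_onD[OF abs_powr_convex[OF q], of v] uv by (intro sum_mono) (simp add: u)
  also have "\<dots> = u * (\<Sum>i\<in>UNIV. \<bar>z $ i\<bar> powr q) + v * (\<Sum>i\<in>UNIV. \<bar>w $ i\<bar> powr q)"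
    by (simp add: sum.distrib sum_distrib_left)
  also have "\<dots> \<le> u * 1 + v * 1"
    using zw uv by (intro add_mono mult_left_mono) (simp_all add: lq_norm_le_1_iff[OF q])
  finally show "u *\<^sub>R z + v *\<^sub>R w \<in> {z. lq_norm q z \<le> 1}"
    using uv by (simp add: lq_norm_le_1_iff[OF q])
qed

lemma lq_norm_triangle:
  assumes q: "q \<ge> 1"
  shows "lq_norm q (x + y) \<le> lq_norm q x + lq_norm q y"
proof (rule subadditive_if_convex_unit_ball)
  show "lq_norm q (c *\<^sub>R z) = c * lq_norm q z" if "c > 0" for c and z :: "real^'a"
    using lq_norm_scaleR[OF q, of c z] that by simp
  show "lq_norm q z > 0" if "z \<noteq> 0" for z :: "real^'a"
    using lq_norm_pos[OF q that] .
qed (rule convex_lq_norm_unit_ball[OF q])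

lemma lq_norm_diff_le: "q \<ge> 1 \<Longrightarrow> lq_norm q (x - y) \<le> lq_norm q x + lq_norm q y"
  using lq_norm_triangle[of q x "- y"] lq_norm_minus[of q y] by simp

lemma lq_norm_convex:
  assumes q: "q \<ge> 1"
  shows "convex_on UNIV (lq_norm q)"
proof (rule convex_onI)
  fix t :: real and x y :: "real^'a"
  assume "0 < t" "t < 1"
  then show "lq_norm q ((1 - t) *\<^sub>R x + t *\<^sub>R y) \<le> (1 - t) * lq_norm q x + t * lq_norm q y"
    using lq_norm_triangle[OF q, of "(1 - t) *\<^sub>R x" "t *\<^sub>R y"] by (simp add: lq_norm_scaleR[OF q])
qed simp

lemma bdd_above_lq_dual:
  assumes q: "q \<ge> 1"
  shows "bdd_above {v \<bullet> x | x. lq_norm q x \<le> 1}"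
proof (rule bdd_aboveI)
  fix z assume "z \<in> {v \<bullet> x | x. lq_norm q x \<le> 1}"
  then obtain x where z: "z = v \<bullet> x" and x: "lq_norm q x \<le> 1" by auto
  have "v $ i * x $ i \<le> \<bar>v $ i\<bar>" for i
    using abs_le_lq_norm[OF q, of x i] x
    by (metis abs_ge_self abs_mult dual_order.trans mult_left_le abs_ge_zero)
  then show "z \<le> (\<Sum>i\<in>UNIV. \<bar>v $ i\<bar>)"
    unfolding z inner_vec_def by (intro sum_mono) simp
qed

lemma inner_le_dual_norm:
  fixes N :: "real^'p \<Rightarrow> real"
  assumes homogeneous: "\<And>c x. c > 0 \<Longrightarrow> N (c *\<^sub>R x) = c * N x"
    and positive: "\<And>x. x \<noteq> 0 \<Longrightarrow> N x > 0"
    and bdd: "bdd_above {v \<bullet> x | x. N x \<le> 1}"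
  shows "v \<bullet> x \<le> dual_norm N v * N x"
proof (cases "x = 0")
  case True then show ?thesis using homogeneous[of 2 0] by simp
next
  case False
  define a where "a = N x"
  have a: "a > 0" using positive[OF False] by (simp add: a_def)
  have "N ((1/a) *\<^sub>R x) \<le> 1" using a by (simp add: homogeneous a_def)
  then have "v \<bullet> ((1/a) *\<^sub>R x) \<le> dual_norm N v"
    unfolding dual_norm_def by (intro cSup_upper[OF _ bdd]) blast
  then show ?thesis using a by (simp add: a_def divide_le_eq mult.commute)
qed

lemma inner_le_dual_lq_norm:
  assumes q: "q \<ge> 1"
  shows "v \<bullet> x \<le> dual_norm (lq_norm q) v * lq_norm q x"
  by (rule inner_le_dual_norm) (simp_all add: lq_norm_scaleR[OF q] lq_norm_pos[OF q] bdd_above_lq_dual[OF q])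

lemma DERIV_ge_right_quotient_bound:
  fixes h :: "real \<Rightarrow> real"
  assumes "(h has_real_derivative D) (at 0)"
    and "\<And>t. 0 < t \<Longrightarrow> t \<le> 1 \<Longrightarrow> c \<le> (h t - h 0) / t"
  shows "c \<le> D"
proof -
  have "((\<lambda>t. (h t - h 0) / t) \<longlongrightarrow> D) (at_right 0)"
    using assms(1) by (simp add: DERIV_def filterlim_at_split)
  moreover have "eventually (\<lambda>t. c \<le> (h t - h 0) / t) (at_right (0::real))"
    using eventually_at_right_real[OF zero_less_one] by eventually_elim (auto intro: assms(2))
  ultimately show ?thesis by (rule tendsto_lowerbound) simp
qed

lemma norm_sq_diff_scaleR:
  fixes r w :: "'a::real_inner"
  shows "(norm (r - t *\<^sub>R w))\<^sup>2 = r \<bullet> r - 2 * t * (r \<bullet> w) + t\<^sup>2 * (w \<bullet> w)"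
  unfolding power2_norm_eq_inner
  by (simp add: inner_diff_left inner_diff_right inner_commute power2_eq_square algebra_simps)

lemma penalized_regression_first_order:
  fixes X :: "real^'p^'n" and Y :: "real^'n" and pen :: "real^'p \<Rightarrow> real"
  assumes minimal: "\<And>\<beta>. g ((norm (Y - X *v \<beta>min))\<^sup>2) + pen \<beta>min \<le> g ((norm (Y - X *v \<beta>))\<^sup>2) + pen \<beta>"
    and convex: "convex_on UNIV pen"
    and deriv: "(g has_real_derivative g') (at ((norm (Y - X *v \<beta>min))\<^sup>2))"
  shows "2 * g' * ((Y - X *v \<beta>min) \<bullet> (X *v (\<beta> - \<beta>min))) \<le> pen \<beta> - pen \<beta>min"
proof -
  define r w where "r = Y - X *v \<beta>min" and "w = X *v (\<beta> - \<beta>min)"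
  define h where "h t = g ((norm (r - t *\<^sub>R w))\<^sup>2)" for t
  have "(h has_real_derivative g' * (- 2 * (r \<bullet> w))) (at 0)"
  proof -
    have "((\<lambda>t. r \<bullet> r - 2 * t * (r \<bullet> w) + t\<^sup>2 * (w \<bullet> w)) has_real_derivative - 2 * (r \<bullet> w)) (at 0)"
      by (rule derivative_eq_intros | simp)+
    moreover have "(g has_real_derivative g') (at (r \<bullet> r - 2 * 0 * (r \<bullet> w) + 0\<^sup>2 * (w \<bullet> w)))"
      using deriv by (simp add: r_def power2_norm_eq_inner)
    ultimately show ?thesis
      unfolding h_def norm_sq_diff_scaleR by (rule DERIV_chain2[rotated])
  qed
  moreover have "pen \<beta>min - pen \<beta> \<le> (h t - h 0) / t" if t: "0 < t" "t \<le> 1" for t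
  proof -
    have segment: "Y - X *v ((1 - t) *\<^sub>R \<beta>min + t *\<^sub>R \<beta>) = r - t *\<^sub>R w"
      by (simp add: r_def w_def algebra_simps)
    have "h 0 + pen \<beta>min \<le> h t + pen ((1 - t) *\<^sub>R \<beta>min + t *\<^sub>R \<beta>)"
      using minimal[of "(1 - t) *\<^sub>R \<beta>min + t *\<^sub>R \<beta>"]
      unfolding segment r_def[symmetric] by (simp add: h_def)
    also have "\<dots> \<le> h t + ((1 - t) * pen \<beta>min + t * pen \<beta>)"
      using convex_onD[OF convex, of t] t by simp
    finally have "t * (pen \<beta>min - pen \<beta>) \<le> h t - h 0" by (simp add: algebra_simps)
    then show ?thesis using t by (simp add: le_divide_eq mult.commute)
  qed
  ultimately have "pen \<beta>min - pen \<beta> \<le> g' * (- 2 * (r \<bullet> w))"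
    by (rule DERIV_ge_right_quotient_bound)
  then show ?thesis by (simp add: r_def w_def)
qed

lemma convex_on_sum_fun:
  assumes "finite I" "convex S" "\<And>i. i \<in> I \<Longrightarrow> convex_on S (f i)"
  shows "convex_on S (\<lambda>x. \<Sum>i\<in>I. f i x)"
  using assms by (induction I rule: finite_induct) (simp_all add: convex_on_const convex_on_add)

lemma convex_on_linear_image:
  assumes "convex_on UNIV f" "linear L"
  shows "convex_on UNIV (\<lambda>x. f (L x))"
proof (rule convex_onI)
  fix t :: real and x y
  assume "0 < t" "t < 1"
  then show "f (L ((1 - t) *\<^sub>R x + t *\<^sub>R y)) \<le> (1 - t) * f (L x) + t * f (L y)"
    using convex_onD[OF assms(1), of t "L x" "L y"]
    by (simp add: linear_add[OF assms(2)] linear_scale[OF assms(2)])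
qed simp

lemma sum_matrix_vector_mult:
  fixes A :: "'i \<Rightarrow> real^'n^'m"
  assumes "finite S"
  shows "sum A S *v x = (\<Sum>j\<in>S. A j *v x)"
  using assms by (induction S rule: finite_induct) (auto simp: matrix_vector_mult_add_rdistrib)

lemma inner_matrix_vector_decompose:
  fixes X :: "real^'p^'n" and A :: "'i \<Rightarrow> real^'m^'p" and B :: "'i \<Rightarrow> real^'p^'m"
  assumes "finite J" and resolution: "(\<Sum>j\<in>J. A j ** B j) = mat 1"
  shows "e \<bullet> (X *v d) = (\<Sum>j\<in>J. (transpose (X ** A j) *v e) \<bullet> (B j *v d))"
proof -
  have "X *v d = X *v ((\<Sum>j\<in>J. A j ** B j) *v d)"
    by (simp add: resolution)
  also have "\<dots> = (\<Sum>j\<in>J. (X ** A j) *v (B j *v d))"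
    by (simp add: sum_matrix_vector_mult[OF \<open>finite J\<close>] vec.sum matrix_vector_mul_assoc matrix_mul_assoc)
  finally show ?thesis by (simp add: inner_sum_right dot_lmul_matrix)
qed

lemma dual_lq_norm_nonneg:
  assumes "q \<ge> 1"
  shows "dual_norm (lq_norm q) v \<ge> 0"
proof -
  have "lq_norm q (0::real^'a) \<le> 1" using assms by (simp add: lq_norm_def)
  then have "v \<bullet> 0 \<in> {v \<bullet> x | x. lq_norm q x \<le> 1}" by blast
  then show ?thesis
    unfolding dual_norm_def using cSup_upper[OF _ bdd_above_lq_dual[OF assms]] by fastforce
qed

lemma objective_first_order_bound:
  fixes X :: "real^'p^'n" and Y :: "real^'n"
  assumes minimal: "\<And>\<beta>. objective g X Y k M q lam \<beta>min \<le> objective g X Y k M q lam \<beta>"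
    and deriv: "(g has_real_derivative g') (at ((norm (Y - X *v \<beta>min))\<^sup>2))" and "g' > 0"
    and q_ge: "\<And>j. j \<in> {1..k} \<Longrightarrow> q j \<ge> 1"
    and weights: "\<And>j. j \<in> {1..k} \<Longrightarrow> lam j = 2 * g' * w j" "\<And>j. j \<in> {1..k} \<Longrightarrow> w j \<ge> 0"
  shows "(Y - X *v \<beta>min) \<bullet> (X *v (\<beta> - \<beta>min))
    \<le> (\<Sum>j\<in>{1..k}. w j * (lq_norm (q j) (M j *v \<beta>) - lq_norm (q j) (M j *v \<beta>min)))"
proof -
  define pen where "pen b = (\<Sum>j\<in>{1..k}. lam j * lq_norm (q j) (M j *v b))" for b
  have "convex_on UNIV (\<lambda>b. lam j * lq_norm (q j) (M j *v b))" if "j \<in> {1..k}" for j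
    using weights[OF that] \<open>g' > 0\<close> convex_on_linear_image[OF lq_norm_convex[OF q_ge[OF that]], of "(*v) (M j)"]
    by (intro convex_on_cmul) auto
  then have "convex_on UNIV pen"
    unfolding pen_def by (intro convex_on_sum_fun) auto
  then have "2 * g' * ((Y - X *v \<beta>min) \<bullet> (X *v (\<beta> - \<beta>min))) \<le> pen \<beta> - pen \<beta>min"
    using minimal deriv unfolding objective_def pen_def[symmetric]
    by (intro penalized_regression_first_order) auto
  also have "\<dots> = 2 * g' * (\<Sum>j\<in>{1..k}. w j * (lq_norm (q j) (M j *v \<beta>) - lq_norm (q j) (M j *v \<beta>min)))"
    unfolding pen_def by (simp add: weights(1) sum_distrib_left sum_subtractf[symmetric] algebra_simps)
  finally show ?thesis using \<open>g' > 0\<close> by simp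
qed

lemma inner_diff_le_sum_dual_lq_norms:
  fixes X :: "real^'p^'n" and A :: "'i \<Rightarrow> real^'m^'p" and B :: "'i \<Rightarrow> real^'p^'m"
  assumes "finite J" "(\<Sum>j\<in>J. A j ** B j) = mat 1" and q_ge: "\<And>j. j \<in> J \<Longrightarrow> q j \<ge> 1"
  shows "e \<bullet> (X *v (b - c)) \<le> (\<Sum>j\<in>J. dual_norm (lq_norm (q j)) (transpose (X ** A j) *v e)
      * (lq_norm (q j) (B j *v b) + lq_norm (q j) (B j *v c)))"
  unfolding inner_matrix_vector_decompose[OF assms(1,2), of e X "b - c"]
proof (intro sum_mono)
  fix j assume j: "j \<in> J"
  have "lq_norm (q j) (B j *v (b - c)) \<le> lq_norm (q j) (B j *v b) + lq_norm (q j) (B j *v c)"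
    using lq_norm_diff_le[OF q_ge[OF j]] by (simp add: matrix_vector_mult_diff_distrib)
  then show "(transpose (X ** A j) *v e) \<bullet> (B j *v (b - c)) \<le> dual_norm (lq_norm (q j)) (transpose (X ** A j) *v e)
      * (lq_norm (q j) (B j *v b) + lq_norm (q j) (B j *v c))"
    using inner_le_dual_lq_norm[OF q_ge[OF j]] dual_lq_norm_nonneg[OF q_ge[OF j]]
    by (meson mult_left_mono order_trans)
qed

lemma norm_sq_le_add_inner:
  fixes a b :: "'a::real_inner"
  shows "(norm a)\<^sup>2 \<le> (norm b)\<^sup>2 + 2 * (a \<bullet> (a - b))"
proof -
  have "2 * (a \<bullet> (a - b)) = (norm a)\<^sup>2 - (norm b)\<^sup>2 + (norm (a - b))\<^sup>2"
    unfolding power2_norm_eq_inner by (simp add: inner_diff_left inner_diff_right inner_commute)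
  then show ?thesis by simp
qed

theorem mainTheorem6:
  fixes X :: "real^'p^'n" and Y \<epsilon> :: "real^'n" and \<beta>star :: "real^'p"
    and g g' :: "real \<Rightarrow> real" and k :: nat
    and M P :: "nat \<Rightarrow> real^'p^'p" and q :: "nat \<Rightarrow> real"
    and lam :: "nat \<Rightarrow> real" and \<beta>bar :: "real^'p"
  assumes model: "Y = X *v \<beta>star + \<epsilon>"
    and g_nonneg: "\<And>t. g t \<ge> 0"
    and g0: "g 0 = 0"
    and g_cont: "continuous_on {0..} g"
    and g_mono: "strict_mono_on {0..} g"
    and g_deriv: "\<And>t. t > 0 \<Longrightarrow> (g has_real_derivative g' t) (at t)"
    and g'_cont: "continuous_on {0<..} g'"
    and g'_pos: "\<And>t. t > 0 \<Longrightarrow> g' t > 0"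
    and g'_antimono: "\<And>s t. 0 < s \<Longrightarrow> s \<le> t \<Longrightarrow> g' t \<le> g' s"
    and g_sconv: "strictly_convex_on UNIV (\<lambda>\<alpha>::real^'n. g ((norm \<alpha>)\<^sup>2))"
    and k_pos: "k \<ge> 1"
    and ker: "\<And>\<beta>. (\<forall>j\<in>{1..k}. M j *v \<beta> = 0) \<Longrightarrow> \<beta> = 0"
    and q_ge: "\<And>j. j \<in> {1..k} \<Longrightarrow> q j \<ge> 1"
    and P_proj: "\<And>j. j \<in> {1..k} \<Longrightarrow> P j ** P j = P j"
    and P_sum: "(\<Sum>j\<in>{1..k}. P j ** pinv (M j) ** M j) = mat 1"
    and Y_nz: "Y \<noteq> 0"
    and noise: "\<And>j. j \<in> {1..k} \<Longrightarrow>
       dual_norm (lq_norm (q j)) (transpose (X ** P j ** pinv (M j)) *v \<epsilon>) > 0"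
    and lam_pos: "\<And>j. j \<in> {1..k} \<Longrightarrow> lam j > 0"
    and bar_min: "\<And>\<beta>. objective g X Y k M q lam \<beta>bar \<le> objective g X Y k M q lam \<beta>"
    and resid_pos: "(norm (Y - X *v \<beta>bar))\<^sup>2 > 0"
    and lam_choice: "\<And>j. j \<in> {1..k} \<Longrightarrow>
       lam j / (2 * g' ((norm (Y - X *v \<beta>bar))\<^sup>2))
         = dual_norm (lq_norm (q j)) (transpose (X ** P j ** pinv (M j)) *v \<epsilon>)"
  shows "(1 / real CARD('n)) * (norm (X *v (\<beta>star - \<beta>bar)))\<^sup>2
     \<le> (INF \<beta>. (1 / real CARD('n)) * (norm (X *v (\<beta>star - \<beta>)))\<^sup>2
          + (4 / real CARD('n)) * (\<Sum>j\<in>{1..k}.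
              dual_norm (lq_norm (q j)) (transpose (X ** P j ** pinv (M j)) *v \<epsilon>)
              * lq_norm (q j) (M j *v \<beta>)))"
proof (rule cINF_greatest)
  fix \<beta> :: "real^'p"
  define D where "D j = dual_norm (lq_norm (q j)) (transpose (X ** P j ** pinv (M j)) *v \<epsilon>)" for j
  define s where "s = (norm (Y - X *v \<beta>bar))\<^sup>2"
  have "g' s > 0" using g'_pos resid_pos by (simp add: s_def)
  then have fit: "(Y - X *v \<beta>bar) \<bullet> (X *v (\<beta> - \<beta>bar))
      \<le> (\<Sum>j\<in>{1..k}. D j * (lq_norm (q j) (M j *v \<beta>) - lq_norm (q j) (M j *v \<beta>bar)))"
    using lam_choice q_ge dual_lq_norm_nonneg
    by (intro objective_first_order_bound[OF bar_min g_deriv[OF resid_pos]])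
      (auto simp: D_def s_def field_simps)
  have noise_bound: "\<epsilon> \<bullet> (X *v (\<beta>bar - \<beta>))
      \<le> (\<Sum>j\<in>{1..k}. D j * (lq_norm (q j) (M j *v \<beta>) + lq_norm (q j) (M j *v \<beta>bar)))"
    using inner_diff_le_sum_dual_lq_norms[OF _ P_sum q_ge, where e = \<epsilon> and X = X and b = \<beta>bar and c = \<beta>]
    by (simp add: D_def matrix_mul_assoc add.commute)
  have "(X *v (\<beta>star - \<beta>bar)) \<bullet> (X *v (\<beta>star - \<beta>bar) - X *v (\<beta>star - \<beta>))
      = (Y - X *v \<beta>bar) \<bullet> (X *v (\<beta> - \<beta>bar)) + \<epsilon> \<bullet> (X *v (\<beta>bar - \<beta>))"
    unfolding model by (simp add: algebra_simps inner_diff_left inner_diff_right)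
  also have "\<dots> \<le> 2 * (\<Sum>j\<in>{1..k}. D j * lq_norm (q j) (M j *v \<beta>))"
    using add_mono[OF fit noise_bound] by (simp add: sum.distrib[symmetric] sum_distrib_left algebra_simps)
  finally have "(norm (X *v (\<beta>star - \<beta>bar)))\<^sup>2
      \<le> (norm (X *v (\<beta>star - \<beta>)))\<^sup>2 + 4 * (\<Sum>j\<in>{1..k}. D j * lq_norm (q j) (M j *v \<beta>))"
    using norm_sq_le_add_inner[of "X *v (\<beta>star - \<beta>bar)" "X *v (\<beta>star - \<beta>)"] by simp
  then show "(1 / real CARD('n)) * (norm (X *v (\<beta>star - \<beta>bar)))\<^sup>2
      \<le> (1 / real CARD('n)) * (norm (X *v (\<beta>star - \<beta>)))\<^sup>2
        + (4 / real CARD('n)) * (\<Sum>j\<in>{1..k}. D j * lq_norm (q j) (M j *v \<beta>))"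
    by (simp add: divide_right_mono add_divide_distrib[symmetric])
qed simp

end
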